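(* Let $X$ be a connected, locally connected normal space with at least two points. Then $X$ has a quotient space homeomorphic to the unit interval $[0,1]$; equivalently, there exists a continuous quotient surjection $f\colon X\to[0,1]$.
   Context: Here a normal space is a topological space in which singletons are closed and any two disjoint closed sets have disjoint open neighbourhoods. A surjection $f\colon X\to Y$ is a quotient map if for every $G\subseteq Y$, $G$ is open in $Y$ iff $f^{-1}(G)$ is open in $X$. "$X$ has a quotient homeomorphic to $[0,1]$" means there is an equivalence relation on $X$ whose quotient space is homeomorphic to $[0,1]$. *)

theory Defs
  imports "HOL-Analysis.Analysis"
begin

end

theory Submission
  imports Defs
begin

text \<open>Let \<open>f\<close> be continuous from a connected, locally connected space to the reals and
  let \<open>f\<^sup>-\<^sup>1(U)\<close> be open. If \<open>t \<in> U\<close> is a value of \<open>f\<close> below some other value, then the open set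
  \<open>{f > t}\<close> is a proper nonempty subset, so by connectedness it has a boundary point \<open>x\<close>, which
  satisfies \<open>f x = t\<close>. A connected neighbourhood of \<open>x\<close> inside \<open>f\<^sup>-\<^sup>1(U)\<close> meets \<open>{f > t}\<close>, so its
  image is an interval in \<open>U\<close> reaching beyond \<open>t\<close>. Arguing symmetrically on the left shows that
  \<open>f\<close> is a quotient map onto its image. A Urysohn function separating two points then maps
  onto \<open>[0,1]\<close> by connectedness.\<close>

lemma connected_space_closure_of_nontrivial_open:
  assumes "connected_space X" "openin X B" "B \<noteq> {}" "B \<noteq> topspace X"
  obtains x where "x \<in> X closure_of B" "x \<notin> B"
proof -
  have "\<not> closedin X B"
    using assms connected_space_clopen_in by blast
  then have "X closure_of B \<noteq> B"
    by (metis closedin_closure_of)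
  then show thesis
    using that closure_of_subset[OF openin_subset[OF \<open>openin X B\<close>]] by blast
qed

lemma open_preimage_contains_right_interval:
  fixes f :: "'a \<Rightarrow> real"
  assumes conn: "connected_space X" and lc: "locally_connected_space X"
    and f: "continuous_map X euclideanreal f"
    and U: "openin X {x \<in> topspace X. f x \<in> U}" "t \<in> U"
    and a: "a \<in> topspace X" "f a = t" and b: "b \<in> topspace X" "t < f b"
  shows "\<exists>s>t. {t..s} \<subseteq> U"
proof -
  define B where "B = {x \<in> topspace X. f x \<in> {t<..}}"
  have "openin X B"
    unfolding B_def using openin_continuous_map_preimage[OF f, of "{t<..}"] by simp
  moreover have "B \<noteq> {}" "B \<noteq> topspace X"
    using a b unfolding B_def by auto
  ultimately obtain x where x: "x \<in> X closure_of B" "x \<notin> B"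
    using connected_space_closure_of_nontrivial_open[OF conn] by metis
  have "X closure_of B \<subseteq> {x \<in> topspace X. f x \<in> {t..}}"
    using closedin_continuous_map_preimage[OF f, of "{t..}"]
    by (intro closure_of_minimal) (auto simp: B_def)
  with x have xt: "x \<in> topspace X" "f x = t"
    unfolding B_def by auto
  obtain W where W: "openin X W" "connectedin X W" "x \<in> W"
      "W \<subseteq> {x \<in> topspace X. f x \<in> U}"
    using lc U xt unfolding locally_connected_space by (metis (mono_tags, lifting) mem_Collect_eq)
  obtain y where y: "y \<in> B" "y \<in> W"
    using x(1) W(1,3) unfolding in_closure_of by blast
  have "connected (f ` W)"
    using connectedin_continuous_map_image[OF f W(2)] by simp
  then have "{t..f y} \<subseteq> f ` W"
    using xt W(3) y(2) by (intro connected_contains_Icc) auto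
  moreover have "f ` W \<subseteq> U"
    using W(4) by auto
  moreover have "t < f y"
    using y(1) unfolding B_def by simp
  ultimately show ?thesis
    by blast
qed

lemma open_preimage_right_neighbourhood:
  fixes f :: "'a \<Rightarrow> real"
  assumes "connected_space X" "locally_connected_space X"
    and "continuous_map X euclideanreal f"
    and "openin X {x \<in> topspace X. f x \<in> U}" "t \<in> U" "t \<in> f ` topspace X"
  shows "\<exists>e>0. \<forall>y \<in> f ` topspace X. t \<le> y \<and> y < t + e \<longrightarrow> y \<in> U"
proof (cases "\<exists>b \<in> topspace X. t < f b")
  case True
  then obtain s where "s > t" "{t..s} \<subseteq> U"
    using open_preimage_contains_right_interval[OF assms(1-5)] assms(6) by blast
  then show ?thesis
    by (intro exI[of _ "s - t"]) auto
next
  case False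
  then show ?thesis
    using \<open>t \<in> U\<close> by (intro exI[of _ 1]) force
qed

lemma open_preimage_left_neighbourhood:
  fixes f :: "'a \<Rightarrow> real"
  assumes conn: "connected_space X" and lc: "locally_connected_space X"
    and f: "continuous_map X euclideanreal f"
    and U: "openin X {x \<in> topspace X. f x \<in> U}" "t \<in> U" "t \<in> f ` topspace X"
  shows "\<exists>e>0. \<forall>y \<in> f ` topspace X. t - e < y \<and> y \<le> t \<longrightarrow> y \<in> U"
proof -
  have "continuous_map X euclideanreal (\<lambda>x. - f x)"
    using f by (simp add: continuous_map_minus)
  moreover have "{x \<in> topspace X. - f x \<in> uminus ` U} = {x \<in> topspace X. f x \<in> U}"
    by force
  moreover have "(\<lambda>x. - f x) ` topspace X = uminus ` f ` topspace X"
    by (simp add: image_image)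
  ultimately obtain e where "e > 0"
      and e: "\<forall>y \<in> uminus ` f ` topspace X. - t \<le> y \<and> y < - t + e \<longrightarrow> y \<in> uminus ` U"
    using open_preimage_right_neighbourhood[OF conn lc, of "\<lambda>x. - f x" "uminus ` U" "- t"] U
    by auto
  have "y \<in> U" if "y \<in> f ` topspace X" "t - e < y" "y \<le> t" for y
    using e that by force
  with \<open>e > 0\<close> show ?thesis
    by blast
qed

theorem quotient_map_real_connected_locally_connected:
  fixes f :: "'a \<Rightarrow> real"
  assumes conn: "connected_space X" and lc: "locally_connected_space X"
    and f: "continuous_map X euclideanreal f"
  shows "quotient_map X (top_of_set (f ` topspace X)) f"
  unfolding quotient_map_def
proof (intro conjI allI impI)
  fix U assume "U \<subseteq> topspace (top_of_set (f ` topspace X))"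
  then have U: "U \<subseteq> f ` topspace X"
    by simp
  show "openin X {x \<in> topspace X. f x \<in> U} = openin (top_of_set (f ` topspace X)) U"
  proof
    assume V: "openin X {x \<in> topspace X. f x \<in> U}"
    show "openin (top_of_set (f ` topspace X)) U"
      unfolding openin_euclidean_subtopology_iff
    proof (intro conjI ballI U)
      fix t assume t: "t \<in> U"
      then have "t \<in> f ` topspace X"
        using U by blast
      obtain e1 where "e1 > 0"
        and right: "\<forall>y \<in> f ` topspace X. t \<le> y \<and> y < t + e1 \<longrightarrow> y \<in> U"
        using open_preimage_right_neighbourhood[OF conn lc f V t \<open>t \<in> f ` topspace X\<close>] by blast
      obtain e2 where "e2 > 0"
        and left: "\<forall>y \<in> f ` topspace X. t - e2 < y \<and> y \<le> t \<longrightarrow> y \<in> U"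
        using open_preimage_left_neighbourhood[OF conn lc f V t \<open>t \<in> f ` topspace X\<close>] by blast
      have "y \<in> U" if "y \<in> f ` topspace X" "dist y t < min e1 e2" for y
      proof (cases "y \<le> t")
        case True
        then show ?thesis
          using left that by (auto simp: dist_real_def)
      next
        case False
        then show ?thesis
          using right that by (auto simp: dist_real_def)
      qed
      with \<open>e1 > 0\<close> \<open>e2 > 0\<close>
      show "\<exists>e>0. \<forall>y \<in> f ` topspace X. dist y t < e \<longrightarrow> y \<in> U"
        by (intro exI[of _ "min e1 e2"]) auto
    qed
  next
    have "continuous_map X (top_of_set (f ` topspace X)) f"
      using continuous_map_into_subtopology[OF f] by blast
    then show "openin (top_of_set (f ` topspace X)) U \<Longrightarrow> openin X {x \<in> topspace X. f x \<in> U}"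
      using openin_continuous_map_preimage by blast
  qed
qed simp

theorem mainTheorem3:
  fixes X :: "'a topology"
  assumes "connected_space X"
    and "locally_connected_space X"
    and "t1_space X"
    and "normal_space X"
    and "\<exists>a b. a \<in> topspace X \<and> b \<in> topspace X \<and> a \<noteq> b"
  shows "\<exists>f. continuous_map X (top_of_set {0..1::real}) f
              \<and> quotient_map X (top_of_set {0..1::real}) f"
proof -
  obtain a b where ab: "a \<in> topspace X" "b \<in> topspace X" "a \<noteq> b"
    using assms(5) by blast
  then have "closedin X {a}" "closedin X {b}" "disjnt {a} {b}"
    using assms(3) by (simp_all add: t1_space_closedin_singleton)
  then obtain f where f: "continuous_map X (top_of_set {0..1::real}) f" "f a = 0" "f b = 1"
    using Urysohn_lemma[OF assms(4), of "{a}" "{b}" 0 1] by auto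
  then have fR: "continuous_map X euclideanreal f"
    by (simp add: continuous_map_in_subtopology)
  have "connected (f ` topspace X)"
    using connectedin_continuous_map_image[OF fR] assms(1) by (simp add: connectedin_topspace)
  then have "{0..1} \<subseteq> f ` topspace X"
    using ab f(2,3) by (intro connected_contains_Icc) (auto intro: sym)
  then have "f ` topspace X = {0..1}"
    using f(1) by (auto simp: continuous_map_in_subtopology)
  then show ?thesis
    using f(1) quotient_map_real_connected_locally_connected[OF assms(1,2) fR] by metis
qed

end
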